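(* Let $K$ be a field and $\beta<\alpha$ countable ordinals. Then there is a $K$-algebra isomorphism $B_{\alpha,1}\cong B_{\beta,1}\boxplus B_{\alpha,1}$.
   Context: For a sequence $\mathcal R=(R_i\mid i\in A)$ of $K$-algebras indexed by an infinite set $A$, $R(A,K,\mathcal R)$ is the $K$-subalgebra $\bigoplus_{i\in A}R_i\oplus1_P\cdot K$ of $P=\prod_{i\in A}R_i$; $\boxplus$ is ring direct product. Define $B_{0,1}=K$; $B_{\beta+1,1}=R(\aleph_0,K,\mathcal R)$ with $\mathcal R$ the constant sequence $R_m=B_{\beta,1}$ ($m<\aleph_0$); for limit $\alpha$, $B_{\alpha,1}=R(\alpha,K,(B_{\beta,1}\mid\beta<\alpha))$. *)

theory Defs
  imports "HOL-Algebra.Algebra"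
begin

text \<open>Uniform carrier type: every algebra in the construction lives inside 'k bt.
  A leaf Lf c is a scalar of K; a node Nd f is a family indexed by naturals
  (index sets used are subsets of nat: the ordinal index sets are represented by
  the field of a well-order on a subset of nat, and aleph_0 by UNIV).\<close>

datatype 'k bt = Lf 'k | Nd "nat \<Rightarrow> 'k bt"

fun lfv :: "'k bt \<Rightarrow> 'k" where
  "lfv (Lf c) = c" | "lfv (Nd f) = undefined"

fun coord :: "'k bt \<Rightarrow> nat \<Rightarrow> 'k bt" where
  "coord (Nd f) i = f i" | "coord (Lf c) i = undefined"

type_synonym 'k alg = "('k, 'k bt) module"

definition base_alg :: "'k ring \<Rightarrow> 'k alg" where
  "base_alg K = \<lparr>carrier = Lf ` carrier K,
     monoid.mult = (\<lambda>x y. Lf (lfv x \<otimes>\<^bsub>K\<^esub> lfv y)), one = Lf \<one>\<^bsub>K\<^esub>,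
     ring.zero = Lf \<zero>\<^bsub>K\<^esub>, add = (\<lambda>x y. Lf (lfv x \<oplus>\<^bsub>K\<^esub> lfv y)),
     smult = (\<lambda>a x. Lf (a \<otimes>\<^bsub>K\<^esub> lfv x))\<rparr>"

definition prod_alg :: "'k ring \<Rightarrow> nat set \<Rightarrow> (nat \<Rightarrow> 'k alg) \<Rightarrow> 'k alg" where
  "prod_alg K A Rs = \<lparr>carrier = {x. \<exists>f. x = Nd f \<and> (\<forall>i\<in>A. f i \<in> carrier (Rs i))
                                        \<and> (\<forall>i. i \<notin> A \<longrightarrow> f i = Lf \<zero>\<^bsub>K\<^esub>)},
     monoid.mult = (\<lambda>x y. Nd (\<lambda>i. if i \<in> A then coord x i \<otimes>\<^bsub>Rs i\<^esub> coord y i else Lf \<zero>\<^bsub>K\<^esub>)),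
     one = Nd (\<lambda>i. if i \<in> A then \<one>\<^bsub>Rs i\<^esub> else Lf \<zero>\<^bsub>K\<^esub>),
     ring.zero = Nd (\<lambda>i. if i \<in> A then \<zero>\<^bsub>Rs i\<^esub> else Lf \<zero>\<^bsub>K\<^esub>),
     add = (\<lambda>x y. Nd (\<lambda>i. if i \<in> A then coord x i \<oplus>\<^bsub>Rs i\<^esub> coord y i else Lf \<zero>\<^bsub>K\<^esub>)),
     smult = (\<lambda>a x. Nd (\<lambda>i. if i \<in> A then a \<odot>\<^bsub>Rs i\<^esub> coord x i else Lf \<zero>\<^bsub>K\<^esub>))\<rparr>"

definition R_alg :: "'k ring \<Rightarrow> nat set \<Rightarrow> (nat \<Rightarrow> 'k alg) \<Rightarrow> 'k alg" where
  "R_alg K A Rs = (let P = prod_alg K A Rs in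
     P\<lparr>carrier := {s \<oplus>\<^bsub>P\<^esub> (c \<odot>\<^bsub>P\<^esub> \<one>\<^bsub>P\<^esub>) | s c.
        s \<in> carrier P \<and> finite {i \<in> A. coord s i \<noteq> \<zero>\<^bsub>Rs i\<^esub>} \<and> c \<in> carrier K}\<rparr>)"

definition ring_dprod :: "'k ring \<Rightarrow> 'k alg \<Rightarrow> 'k alg \<Rightarrow> 'k alg" where
  "ring_dprod K M N = prod_alg K {0, 1} (\<lambda>i. if i = 0 then M else N)"

text \<open>S is the set of elements of the well-order r
  that represents the current ordinal (S = all elements below a point, or the whole field),
  and rec x is B at the ordinal of the initial segment strictly below x.
  S empty: ordinal 0.  S has a maximum m: successor of the ordinal of underS r m.
  Otherwise: limit ordinal, indexed by its elements (i.e. by the smaller ordinals).\<close>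
definition B_step :: "'k ring \<Rightarrow> nat rel \<Rightarrow> nat set \<Rightarrow> (nat \<Rightarrow> 'k alg) \<Rightarrow> 'k alg" where
  "B_step K r S rec =
     (if S = {} then base_alg K
      else if (\<exists>m\<in>S. \<forall>y\<in>S. (y, m) \<in> r)
        then R_alg K UNIV (\<lambda>_. rec (THE m. m \<in> S \<and> (\<forall>y\<in>S. (y, m) \<in> r)))
      else R_alg K S rec)"

definition B_below :: "'k ring \<Rightarrow> nat rel \<Rightarrow> nat \<Rightarrow> 'k alg" where
  "B_below K r = wfrec (r - Id) (\<lambda>rec x. B_step K r (underS r x) rec)"

text \<open>B_{alpha,1} where alpha is the order type of the well-order r (a countable ordinal).\<close>
definition B_ord :: "'k ring \<Rightarrow> nat rel \<Rightarrow> 'k alg" where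
  "B_ord K r = B_step K r (Field r) (B_below K r)"

definition alg_iso :: "'k ring \<Rightarrow> ('k, 'a, 'c) module_scheme \<Rightarrow> ('k, 'b, 'd) module_scheme
                        \<Rightarrow> ('a \<Rightarrow> 'b) set" where
  "alg_iso K M N = {h. h \<in> ring_iso M N \<and>
      (\<forall>a\<in>carrier K. \<forall>x\<in>carrier M. h (a \<odot>\<^bsub>M\<^esub> x) = a \<odot>\<^bsub>N\<^esub> h x)}"

end

theory Submission
  imports Defs
begin

text \<open>
  The algebra \<open>R(A, K, R)\<close> consists of the tuples in \<open>\<Prod>\<^sub>i R\<^sub>i\<close> that agree with one scalar
  multiple \<open>c\<one>\<close> at all but finitely many coordinates. Splitting off a coordinate \<open>j\<close> gives
  \<open>R(A) \<cong> R\<^sub>j \<boxplus> R(A - {j})\<close>, and shifting \<open>\<nat> - {0}\<close> onto \<open>\<nat>\<close> then shows that \<open>R(\<nat>, M)\<close>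
  absorbs \<open>M\<close>: \<open>R(\<nat>, M) \<cong> M \<boxplus> R(\<nat>, M)\<close>. By associativity of \<open>\<boxplus>\<close>, an algebra absorbs
  whatever one of its direct summands absorbs.

  By well-founded induction, \<open>B(\<gamma>)\<close> absorbs \<open>B(\<beta>)\<close> whenever \<open>\<beta> < \<gamma>\<close>. If \<open>\<gamma> = \<delta> + 1\<close>, then
  \<open>B(\<gamma>) = R(\<nat>, B(\<delta>))\<close> absorbs \<open>B(\<delta>)\<close>, which absorbs \<open>B(\<beta>)\<close> unless \<open>\<beta> = \<delta>\<close>. If \<open>\<gamma>\<close> is a
  limit, then \<open>B(\<gamma>) \<cong> B(\<beta> + 1) \<boxplus> R(\<gamma> - {\<beta> + 1})\<close> and \<open>B(\<beta> + 1) = R(\<nat>, B(\<beta>))\<close> absorbs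
  \<open>B(\<beta>)\<close>. Since \<open>B(\<alpha>)\<close> depends only on the order type of \<open>\<alpha>\<close>, \<open>B(\<beta>)\<close> is isomorphic to
  \<open>B\<close> at the initial segment of \<open>\<alpha>\<close> of type \<open>\<beta>\<close>, which gives the theorem.
\<close>

section \<open>Tuples in a product\<close>

definition tuple :: "'k ring \<Rightarrow> nat set \<Rightarrow> (nat \<Rightarrow> 'k bt) \<Rightarrow> 'k bt" where
  "tuple K A F = Nd (\<lambda>i. if i \<in> A then F i else Lf \<zero>\<^bsub>K\<^esub>)"

lemma coord_tuple [simp]: "coord (tuple K A F) i = (if i \<in> A then F i else Lf \<zero>\<^bsub>K\<^esub>)"
  by (simp add: tuple_def)

lemma tuple_eqI: "(\<And>i. i \<in> A \<Longrightarrow> F i = G i) \<Longrightarrow> tuple K A F = tuple K A G"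
  unfolding tuple_def by auto

lemma tuple_cong [cong]: "A = B \<Longrightarrow> (\<And>i. i \<in> B =simp=> F i = G i) \<Longrightarrow> tuple K A F = tuple K B G"
  unfolding simp_implies_def by (auto intro!: tuple_eqI)

lemma prod_alg_simps [simp]:
  "monoid.mult (prod_alg K A Rs) x y = tuple K A (\<lambda>i. coord x i \<otimes>\<^bsub>Rs i\<^esub> coord y i)"
  "add (prod_alg K A Rs) x y = tuple K A (\<lambda>i. coord x i \<oplus>\<^bsub>Rs i\<^esub> coord y i)"
  "one (prod_alg K A Rs) = tuple K A (\<lambda>i. \<one>\<^bsub>Rs i\<^esub>)"
  "ring.zero (prod_alg K A Rs) = tuple K A (\<lambda>i. \<zero>\<^bsub>Rs i\<^esub>)"
  "smult (prod_alg K A Rs) a x = tuple K A (\<lambda>i. a \<odot>\<^bsub>Rs i\<^esub> coord x i)"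
  by (simp_all add: prod_alg_def tuple_def)

lemma carrier_prod_alg_iff:
  "x \<in> carrier (prod_alg K A Rs) \<longleftrightarrow> (\<exists>F. x = tuple K A F) \<and> (\<forall>i\<in>A. coord x i \<in> carrier (Rs i))"
  unfolding prod_alg_def tuple_def by (auto, metis coord.simps(1))

lemma tuple_in_prod_alg [simp]:
  "tuple K A F \<in> carrier (prod_alg K A Rs) \<longleftrightarrow> (\<forall>i\<in>A. F i \<in> carrier (Rs i))"
  unfolding carrier_prod_alg_iff by auto

lemma coord_in_carrier: "x \<in> carrier (prod_alg K A Rs) \<Longrightarrow> i \<in> A \<Longrightarrow> coord x i \<in> carrier (Rs i)"
  unfolding carrier_prod_alg_iff by blast

lemma tuple_coord: "x \<in> carrier (prod_alg K A Rs) \<Longrightarrow> tuple K A (coord x) = x"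
  unfolding carrier_prod_alg_iff by (auto intro: tuple_eqI)

lemma prod_alg_eqI:
  assumes "x \<in> carrier (prod_alg K A Rs)" "y \<in> carrier (prod_alg K A Rs')"
    and "\<And>i. i \<in> A \<Longrightarrow> coord x i = coord y i"
  shows "x = y"
  by (metis assms tuple_coord tuple_eqI)

section \<open>Algebras of cofinitely scalar tuples\<close>

text \<open>Just enough structure for the carrier of \<^const>\<open>R_alg\<close> to consist of the tuples that are
  cofinitely a fixed scalar multiple of \<open>\<one>\<close>; it is inherited by \<^const>\<open>R_alg\<close>.\<close>

definition scalar_unit_group :: "'k ring \<Rightarrow> ('k, 'a, 'c) module_scheme \<Rightarrow> bool" where
  "scalar_unit_group K M \<longleftrightarrow> abelian_group M \<and> (\<forall>c\<in>carrier K. c \<odot>\<^bsub>M\<^esub> \<one>\<^bsub>M\<^esub> \<in> carrier M)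
     \<and> (\<forall>c\<in>carrier K. \<forall>d\<in>carrier K.
          (c \<oplus>\<^bsub>K\<^esub> d) \<odot>\<^bsub>M\<^esub> \<one>\<^bsub>M\<^esub> = c \<odot>\<^bsub>M\<^esub> \<one>\<^bsub>M\<^esub> \<oplus>\<^bsub>M\<^esub> d \<odot>\<^bsub>M\<^esub> \<one>\<^bsub>M\<^esub>)
     \<and> \<one>\<^bsub>K\<^esub> \<odot>\<^bsub>M\<^esub> \<one>\<^bsub>M\<^esub> = \<one>\<^bsub>M\<^esub>"

lemma scalar_unit_groupD:
  assumes "scalar_unit_group K M"
  shows "abelian_group M"
    and "c \<in> carrier K \<Longrightarrow> c \<odot>\<^bsub>M\<^esub> \<one>\<^bsub>M\<^esub> \<in> carrier M"
    and "c \<in> carrier K \<Longrightarrow> d \<in> carrier K \<Longrightarrow>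
      (c \<oplus>\<^bsub>K\<^esub> d) \<odot>\<^bsub>M\<^esub> \<one>\<^bsub>M\<^esub> = c \<odot>\<^bsub>M\<^esub> \<one>\<^bsub>M\<^esub> \<oplus>\<^bsub>M\<^esub> d \<odot>\<^bsub>M\<^esub> \<one>\<^bsub>M\<^esub>"
    and "\<one>\<^bsub>K\<^esub> \<odot>\<^bsub>M\<^esub> \<one>\<^bsub>M\<^esub> = \<one>\<^bsub>M\<^esub>"
  using assms unfolding scalar_unit_group_def by blast+

lemma scalar_unit_group_one_closed:
  assumes "ring K" "scalar_unit_group K M"
  shows "\<one>\<^bsub>M\<^esub> \<in> carrier M"
  by (metis assms ring.ring_simprules(6) scalar_unit_groupD(2,4))

lemma scalar_unit_group_zero_smult_one:
  assumes "abelian_group K" "scalar_unit_group K M"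
  shows "\<zero>\<^bsub>K\<^esub> \<odot>\<^bsub>M\<^esub> \<one>\<^bsub>M\<^esub> = \<zero>\<^bsub>M\<^esub>"
proof -
  interpret K: abelian_group K by fact
  interpret M: abelian_group M using scalar_unit_groupD(1)[OF assms(2)] .
  let ?z = "\<zero>\<^bsub>K\<^esub> \<odot>\<^bsub>M\<^esub> \<one>\<^bsub>M\<^esub>"
  have z: "?z \<in> carrier M" using scalar_unit_groupD(2)[OF assms(2)] by simp
  have "?z \<oplus>\<^bsub>M\<^esub> ?z = \<zero>\<^bsub>M\<^esub> \<oplus>\<^bsub>M\<^esub> ?z"
    using scalar_unit_groupD(3)[OF assms(2), of "\<zero>\<^bsub>K\<^esub>" "\<zero>\<^bsub>K\<^esub>"] z by simp
  then show ?thesis using z by (simp add: M.add.right_cancel)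
qed

lemma scalar_unit_group_neg_smult_one:
  assumes "abelian_group K" "scalar_unit_group K M" "c \<in> carrier K"
  shows "(\<ominus>\<^bsub>K\<^esub> c) \<odot>\<^bsub>M\<^esub> \<one>\<^bsub>M\<^esub> = \<ominus>\<^bsub>M\<^esub> (c \<odot>\<^bsub>M\<^esub> \<one>\<^bsub>M\<^esub>)"
proof -
  interpret K: abelian_group K by fact
  interpret M: abelian_group M using scalar_unit_groupD(1)[OF assms(2)] .
  have "(\<ominus>\<^bsub>K\<^esub> c) \<odot>\<^bsub>M\<^esub> \<one>\<^bsub>M\<^esub> \<oplus>\<^bsub>M\<^esub> c \<odot>\<^bsub>M\<^esub> \<one>\<^bsub>M\<^esub> = \<zero>\<^bsub>M\<^esub>"
    using assms scalar_unit_groupD(3)[OF assms(2), of "\<ominus>\<^bsub>K\<^esub> c" c]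
      scalar_unit_group_zero_smult_one[OF assms(1,2)] by (simp add: K.l_neg)
  then show ?thesis using assms(3) scalar_unit_groupD(2)[OF assms(2)] by (simp add: M.minus_equality)
qed

definition off_scalar :: "nat set \<Rightarrow> (nat \<Rightarrow> 'k alg) \<Rightarrow> 'k \<Rightarrow> 'k bt \<Rightarrow> nat set" where
  "off_scalar A Rs c x = {i \<in> A. coord x i \<noteq> c \<odot>\<^bsub>Rs i\<^esub> \<one>\<^bsub>Rs i\<^esub>}"

definition cofinitely_scalar :: "'k ring \<Rightarrow> nat set \<Rightarrow> (nat \<Rightarrow> 'k alg) \<Rightarrow> 'k bt set" where
  "cofinitely_scalar K A Rs =
     {x \<in> carrier (prod_alg K A Rs). \<exists>c\<in>carrier K. finite (off_scalar A Rs c x)}"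

lemma cofinitely_scalarI:
  "x \<in> carrier (prod_alg K A Rs) \<Longrightarrow> c \<in> carrier K \<Longrightarrow> finite (off_scalar A Rs c x)
    \<Longrightarrow> x \<in> cofinitely_scalar K A Rs"
  unfolding cofinitely_scalar_def by blast

lemma cofinitely_scalarE:
  assumes "x \<in> cofinitely_scalar K A Rs"
  obtains c where "x \<in> carrier (prod_alg K A Rs)" "c \<in> carrier K" "finite (off_scalar A Rs c x)"
  using assms unfolding cofinitely_scalar_def by blast

lemma cofinitely_scalar_restrict:
  assumes "B \<subseteq> A" and "x \<in> cofinitely_scalar K A Rs"
  shows "tuple K B (coord x) \<in> cofinitely_scalar K B Rs"
proof -
  obtain c where x: "x \<in> carrier (prod_alg K A Rs)" and c: "c \<in> carrier K"
    and fin: "finite (off_scalar A Rs c x)" using assms(2) by (rule cofinitely_scalarE)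
  have "off_scalar B Rs c (tuple K B (coord x)) \<subseteq> off_scalar A Rs c x"
    using assms(1) by (auto simp: off_scalar_def)
  then show ?thesis
    using assms(1) coord_in_carrier[OF x] c fin
    by (intro cofinitely_scalarI[where c = c]) (auto intro: finite_subset)
qed

lemma cofinitely_scalar_extend:
  assumes "a \<in> carrier (Rs j)" and "b \<in> cofinitely_scalar K (A - {j}) Rs"
  shows "tuple K A (\<lambda>i. if i = j then a else coord b i) \<in> cofinitely_scalar K A Rs"
proof -
  obtain c where b: "b \<in> carrier (prod_alg K (A - {j}) Rs)" and c: "c \<in> carrier K"
    and fin: "finite (off_scalar (A - {j}) Rs c b)" using assms(2) by (rule cofinitely_scalarE)
  have "off_scalar A Rs c (tuple K A (\<lambda>i. if i = j then a else coord b i))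
      \<subseteq> insert j (off_scalar (A - {j}) Rs c b)"
    by (auto simp: off_scalar_def)
  then show ?thesis
    using coord_in_carrier[OF b] assms(1) c fin
    by (intro cofinitely_scalarI[where c = c]) (auto intro: finite_subset)
qed

lemma carrier_R_alg_unfolded:
  "carrier (R_alg K A Rs) = {s \<oplus>\<^bsub>prod_alg K A Rs\<^esub> c \<odot>\<^bsub>prod_alg K A Rs\<^esub> \<one>\<^bsub>prod_alg K A Rs\<^esub> | s c.
     s \<in> carrier (prod_alg K A Rs) \<and> finite {i \<in> A. coord s i \<noteq> \<zero>\<^bsub>Rs i\<^esub>} \<and> c \<in> carrier K}"
  unfolding R_alg_def Let_def by simp

lemma carrier_R_alg:
  assumes R: "\<And>i. i \<in> A \<Longrightarrow> scalar_unit_group K (Rs i)"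
  shows "carrier (R_alg K A Rs) = cofinitely_scalar K A Rs"
proof (intro equalityI subsetI)
  fix x assume "x \<in> carrier (R_alg K A Rs)"
  then obtain s c where x: "x = tuple K A (\<lambda>i. coord s i \<oplus>\<^bsub>Rs i\<^esub> c \<odot>\<^bsub>Rs i\<^esub> \<one>\<^bsub>Rs i\<^esub>)"
    and s: "s \<in> carrier (prod_alg K A Rs)" and c: "c \<in> carrier K"
    and fin: "finite {i \<in> A. coord s i \<noteq> \<zero>\<^bsub>Rs i\<^esub>}"
    unfolding carrier_R_alg_unfolded by auto
  have "x \<in> carrier (prod_alg K A Rs)"
    using abelian_groupE(1)[OF scalar_unit_groupD(1)[OF R]] scalar_unit_groupD(2)[OF R c]
      coord_in_carrier[OF s] unfolding x by simp
  moreover have "off_scalar A Rs c x \<subseteq> {i \<in> A. coord s i \<noteq> \<zero>\<^bsub>Rs i\<^esub>}"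
    using abelian_groupE(5)[OF scalar_unit_groupD(1)[OF R]] scalar_unit_groupD(2)[OF R c]
    unfolding off_scalar_def x by auto
  ultimately show "x \<in> cofinitely_scalar K A Rs"
    using fin c by (auto intro: cofinitely_scalarI finite_subset)
next
  fix x assume "x \<in> cofinitely_scalar K A Rs"
  then obtain c where x: "x \<in> carrier (prod_alg K A Rs)" and c: "c \<in> carrier K"
    and fin: "finite (off_scalar A Rs c x)" by (rule cofinitely_scalarE)
  define s where "s = tuple K A (\<lambda>i. coord x i \<ominus>\<^bsub>Rs i\<^esub> c \<odot>\<^bsub>Rs i\<^esub> \<one>\<^bsub>Rs i\<^esub>)"
  have *: "coord x i \<ominus>\<^bsub>Rs i\<^esub> c \<odot>\<^bsub>Rs i\<^esub> \<one>\<^bsub>Rs i\<^esub> \<in> carrier (Rs i)"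
    "coord x i \<ominus>\<^bsub>Rs i\<^esub> c \<odot>\<^bsub>Rs i\<^esub> \<one>\<^bsub>Rs i\<^esub> \<oplus>\<^bsub>Rs i\<^esub> c \<odot>\<^bsub>Rs i\<^esub> \<one>\<^bsub>Rs i\<^esub> = coord x i"
    "coord x i \<ominus>\<^bsub>Rs i\<^esub> c \<odot>\<^bsub>Rs i\<^esub> \<one>\<^bsub>Rs i\<^esub> = \<zero>\<^bsub>Rs i\<^esub> \<longleftrightarrow> coord x i = c \<odot>\<^bsub>Rs i\<^esub> \<one>\<^bsub>Rs i\<^esub>"
    if i: "i \<in> A" for i
  proof -
    interpret abelian_group "Rs i" using scalar_unit_groupD(1)[OF R[OF i]] .
    have "c \<odot>\<^bsub>Rs i\<^esub> \<one>\<^bsub>Rs i\<^esub> \<in> carrier (Rs i)" using scalar_unit_groupD(2)[OF R[OF i] c] .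
    moreover have "coord x i \<in> carrier (Rs i)" using coord_in_carrier[OF x i] .
    ultimately show 1: "coord x i \<ominus>\<^bsub>Rs i\<^esub> c \<odot>\<^bsub>Rs i\<^esub> \<one>\<^bsub>Rs i\<^esub> \<in> carrier (Rs i)"
      and 2: "coord x i \<ominus>\<^bsub>Rs i\<^esub> c \<odot>\<^bsub>Rs i\<^esub> \<one>\<^bsub>Rs i\<^esub> \<oplus>\<^bsub>Rs i\<^esub> c \<odot>\<^bsub>Rs i\<^esub> \<one>\<^bsub>Rs i\<^esub> = coord x i"
      by (auto simp: a_minus_def a_assoc l_neg)
    then show "coord x i \<ominus>\<^bsub>Rs i\<^esub> c \<odot>\<^bsub>Rs i\<^esub> \<one>\<^bsub>Rs i\<^esub> = \<zero>\<^bsub>Rs i\<^esub> \<longleftrightarrow> coord x i = c \<odot>\<^bsub>Rs i\<^esub> \<one>\<^bsub>Rs i\<^esub>"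
      using \<open>c \<odot>\<^bsub>Rs i\<^esub> \<one>\<^bsub>Rs i\<^esub> \<in> carrier (Rs i)\<close> by (auto simp: r_neg a_minus_def)
  qed
  have "s \<in> carrier (prod_alg K A Rs)" unfolding s_def using * by simp
  moreover have "finite {i \<in> A. coord s i \<noteq> \<zero>\<^bsub>Rs i\<^esub>}"
    using fin * unfolding s_def off_scalar_def by (simp add: conj_commute cong: conj_cong)
  moreover have "x = s \<oplus>\<^bsub>prod_alg K A Rs\<^esub> c \<odot>\<^bsub>prod_alg K A Rs\<^esub> \<one>\<^bsub>prod_alg K A Rs\<^esub>"
    using * coord_in_carrier[OF x] by (auto intro!: prod_alg_eqI[OF x, where Rs' = Rs] simp: s_def)
  ultimately show "x \<in> carrier (R_alg K A Rs)"
    unfolding carrier_R_alg_unfolded using c by blast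
qed

lemma R_alg_simps [simp]:
  "monoid.mult (R_alg K A Rs) = monoid.mult (prod_alg K A Rs)"
  "add (R_alg K A Rs) = add (prod_alg K A Rs)"
  "one (R_alg K A Rs) = one (prod_alg K A Rs)"
  "ring.zero (R_alg K A Rs) = ring.zero (prod_alg K A Rs)"
  "smult (R_alg K A Rs) = smult (prod_alg K A Rs)"
  by (simp_all add: R_alg_def Let_def)

lemma R_alg_eq_restrict:
  assumes "\<And>i. i \<in> A \<Longrightarrow> scalar_unit_group K (Rs i)"
  shows "R_alg K A Rs = (prod_alg K A Rs)\<lparr>carrier := cofinitely_scalar K A Rs\<rparr>"
  using carrier_R_alg[OF assms] unfolding R_alg_def Let_def by simp

lemma scalar_unit_group_base_alg:
  assumes "ring K"
  shows "scalar_unit_group K (base_alg K)"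
proof -
  interpret K: ring K by fact
  have "abelian_group (base_alg K)"
    by (rule abelian_groupI)
      (auto simp: base_alg_def K.a_ac intro!: bexI[of _ "Lf (\<ominus>\<^bsub>K\<^esub> _)"])
  then show ?thesis
    unfolding scalar_unit_group_def by (simp add: base_alg_def image_iff K.l_distr)
qed

lemma cofinitely_scalar_add_closed:
  assumes K: "abelian_group K" and R: "\<And>i. i \<in> A \<Longrightarrow> scalar_unit_group K (Rs i)"
    and x: "x \<in> cofinitely_scalar K A Rs" and y: "y \<in> cofinitely_scalar K A Rs"
  shows "x \<oplus>\<^bsub>prod_alg K A Rs\<^esub> y \<in> cofinitely_scalar K A Rs"
proof -
  obtain c where xP: "x \<in> carrier (prod_alg K A Rs)" and c: "c \<in> carrier K"
    "finite (off_scalar A Rs c x)" using x by (rule cofinitely_scalarE)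
  obtain d where yP: "y \<in> carrier (prod_alg K A Rs)" and d: "d \<in> carrier K"
    "finite (off_scalar A Rs d y)" using y by (rule cofinitely_scalarE)
  have "off_scalar A Rs (c \<oplus>\<^bsub>K\<^esub> d) (x \<oplus>\<^bsub>prod_alg K A Rs\<^esub> y)
      \<subseteq> off_scalar A Rs c x \<union> off_scalar A Rs d y"
    using scalar_unit_groupD(3)[OF R] c d by (auto simp: off_scalar_def)
  then show ?thesis
    using c d abelian_groupE(1)[OF K c(1) d(1)] coord_in_carrier[OF xP] coord_in_carrier[OF yP]
      abelian_groupE(1)[OF scalar_unit_groupD(1)[OF R]]
    by (intro cofinitely_scalarI[where c = "c \<oplus>\<^bsub>K\<^esub> d"]) (auto intro: finite_subset)
qed

lemma cofinitely_scalar_zero_closed: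
  assumes K: "abelian_group K" and R: "\<And>i. i \<in> A \<Longrightarrow> scalar_unit_group K (Rs i)"
  shows "\<zero>\<^bsub>prod_alg K A Rs\<^esub> \<in> cofinitely_scalar K A Rs"
proof -
  have "off_scalar A Rs \<zero>\<^bsub>K\<^esub> \<zero>\<^bsub>prod_alg K A Rs\<^esub> = {}"
    using scalar_unit_group_zero_smult_one[OF K R] by (simp add: off_scalar_def)
  then show ?thesis
    using abelian_groupE(2)[OF K] abelian_groupE(2)[OF scalar_unit_groupD(1)[OF R]]
    by (intro cofinitely_scalarI) auto
qed

lemma cofinitely_scalar_neg_closed:
  assumes K: "abelian_group K" and R: "\<And>i. i \<in> A \<Longrightarrow> scalar_unit_group K (Rs i)"
    and x: "x \<in> cofinitely_scalar K A Rs"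
  shows "tuple K A (\<lambda>i. \<ominus>\<^bsub>Rs i\<^esub> coord x i) \<in> cofinitely_scalar K A Rs"
proof -
  obtain c where xP: "x \<in> carrier (prod_alg K A Rs)" and c: "c \<in> carrier K"
    "finite (off_scalar A Rs c x)" using x by (rule cofinitely_scalarE)
  have "off_scalar A Rs (\<ominus>\<^bsub>K\<^esub> c) (tuple K A (\<lambda>i. \<ominus>\<^bsub>Rs i\<^esub> coord x i)) \<subseteq> off_scalar A Rs c x"
    using scalar_unit_group_neg_smult_one[OF K R c(1)] coord_in_carrier[OF xP]
      scalar_unit_groupD(2)[OF R] c(1) scalar_unit_groupD(1)[OF R]
    by (auto simp: off_scalar_def abelian_group.a_inv_inj)
  then show ?thesis
    using c coord_in_carrier[OF xP] abelian_group.a_inv_closed[OF scalar_unit_groupD(1)[OF R]]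
      abelian_group.a_inv_closed[OF K c(1)]
    by (intro cofinitely_scalarI[where c = "\<ominus>\<^bsub>K\<^esub> c"]) (auto intro: finite_subset)
qed

lemma abelian_group_R_alg:
  assumes K: "abelian_group K" and R: "\<And>i. i \<in> A \<Longrightarrow> scalar_unit_group K (Rs i)"
  shows "abelian_group (R_alg K A Rs)"
proof -
  let ?P = "prod_alg K A Rs"
  have ag: "abelian_group (Rs i)" if "i \<in> A" for i using scalar_unit_groupD(1)[OF R[OF that]] .
  have coord: "coord x i \<in> carrier (Rs i)" if "x \<in> cofinitely_scalar K A Rs" "i \<in> A" for x i
    using that by (auto elim: cofinitely_scalarE intro: coord_in_carrier)
  show ?thesis
  proof (rule abelian_groupI; (simp only: carrier_R_alg[OF R] R_alg_simps)?)
    fix x y z assume x: "x \<in> cofinitely_scalar K A Rs" and y: "y \<in> cofinitely_scalar K A Rs"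
      and z: "z \<in> cofinitely_scalar K A Rs"
    show "x \<oplus>\<^bsub>?P\<^esub> y \<oplus>\<^bsub>?P\<^esub> z = x \<oplus>\<^bsub>?P\<^esub> (y \<oplus>\<^bsub>?P\<^esub> z)"
      using coord[OF x] coord[OF y] coord[OF z] abelian_groupE(3)[OF ag] by (auto intro: tuple_eqI)
  next
    fix x y assume x: "x \<in> cofinitely_scalar K A Rs" and y: "y \<in> cofinitely_scalar K A Rs"
    show "x \<oplus>\<^bsub>?P\<^esub> y = y \<oplus>\<^bsub>?P\<^esub> x"
      using coord[OF x] coord[OF y] abelian_groupE(4)[OF ag] by (auto intro: tuple_eqI)
  next
    fix x assume x: "x \<in> cofinitely_scalar K A Rs"
    then have "x \<in> carrier ?P" by (rule cofinitely_scalarE)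
    then show "\<zero>\<^bsub>?P\<^esub> \<oplus>\<^bsub>?P\<^esub> x = x"
      using coord[OF x] abelian_groupE(5)[OF ag] tuple_coord by (auto intro: tuple_eqI)
    have "tuple K A (\<lambda>i. \<ominus>\<^bsub>Rs i\<^esub> coord x i) \<oplus>\<^bsub>?P\<^esub> x = \<zero>\<^bsub>?P\<^esub>"
      using coord[OF x] abelian_group.l_neg[OF ag] by (auto intro: tuple_eqI)
    then show "\<exists>y\<in>cofinitely_scalar K A Rs. y \<oplus>\<^bsub>?P\<^esub> x = \<zero>\<^bsub>?P\<^esub>"
      using cofinitely_scalar_neg_closed[OF K R x] by blast
  qed (use cofinitely_scalar_add_closed[OF K R] cofinitely_scalar_zero_closed[OF K R] in auto)
qed

lemma scalar_unit_group_R_alg: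
  assumes K: "abelian_group K" and R: "\<And>i. i \<in> A \<Longrightarrow> scalar_unit_group K (Rs i)"
  shows "scalar_unit_group K (R_alg K A Rs)"
  unfolding scalar_unit_group_def
proof (intro conjI ballI abelian_group_R_alg[OF K R])
  fix c assume c: "c \<in> carrier K"
  have "off_scalar A Rs c (c \<odot>\<^bsub>prod_alg K A Rs\<^esub> \<one>\<^bsub>prod_alg K A Rs\<^esub>) = {}"
    by (simp add: off_scalar_def)
  then have "c \<odot>\<^bsub>prod_alg K A Rs\<^esub> \<one>\<^bsub>prod_alg K A Rs\<^esub> \<in> cofinitely_scalar K A Rs"
    using c scalar_unit_groupD(2)[OF R] by (intro cofinitely_scalarI[where c = c]) auto
  then show "c \<odot>\<^bsub>R_alg K A Rs\<^esub> \<one>\<^bsub>R_alg K A Rs\<^esub> \<in> carrier (R_alg K A Rs)"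
    using carrier_R_alg[OF R] by simp
  fix d assume "d \<in> carrier K"
  then show "(c \<oplus>\<^bsub>K\<^esub> d) \<odot>\<^bsub>R_alg K A Rs\<^esub> \<one>\<^bsub>R_alg K A Rs\<^esub>
      = c \<odot>\<^bsub>R_alg K A Rs\<^esub> \<one>\<^bsub>R_alg K A Rs\<^esub> \<oplus>\<^bsub>R_alg K A Rs\<^esub> d \<odot>\<^bsub>R_alg K A Rs\<^esub> \<one>\<^bsub>R_alg K A Rs\<^esub>"
    using c scalar_unit_groupD(3)[OF R] by (auto intro: tuple_eqI)
next
  show "\<one>\<^bsub>K\<^esub> \<odot>\<^bsub>R_alg K A Rs\<^esub> \<one>\<^bsub>R_alg K A Rs\<^esub> = \<one>\<^bsub>R_alg K A Rs\<^esub>"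
    using scalar_unit_groupD(4)[OF R] by (auto intro: tuple_eqI)
qed

section \<open>Isomorphisms\<close>

lemma alg_isoI:
  assumes "bij_betw h (carrier M) (carrier N)"
    and "\<And>x y. x \<in> carrier M \<Longrightarrow> y \<in> carrier M \<Longrightarrow> h (x \<otimes>\<^bsub>M\<^esub> y) = h x \<otimes>\<^bsub>N\<^esub> h y"
    and "\<And>x y. x \<in> carrier M \<Longrightarrow> y \<in> carrier M \<Longrightarrow> h (x \<oplus>\<^bsub>M\<^esub> y) = h x \<oplus>\<^bsub>N\<^esub> h y"
    and "h \<one>\<^bsub>M\<^esub> = \<one>\<^bsub>N\<^esub>"
    and "\<And>a x. a \<in> carrier K \<Longrightarrow> x \<in> carrier M \<Longrightarrow> h (a \<odot>\<^bsub>M\<^esub> x) = a \<odot>\<^bsub>N\<^esub> h x"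
  shows "h \<in> alg_iso K M N"
  using assms unfolding alg_iso_def ring_iso_def ring_hom_def bij_betw_def by auto

lemma alg_isoD:
  assumes "h \<in> alg_iso K M N"
  shows "bij_betw h (carrier M) (carrier N)"
    and "x \<in> carrier M \<Longrightarrow> y \<in> carrier M \<Longrightarrow> h (x \<otimes>\<^bsub>M\<^esub> y) = h x \<otimes>\<^bsub>N\<^esub> h y"
    and "x \<in> carrier M \<Longrightarrow> y \<in> carrier M \<Longrightarrow> h (x \<oplus>\<^bsub>M\<^esub> y) = h x \<oplus>\<^bsub>N\<^esub> h y"
    and "h \<one>\<^bsub>M\<^esub> = \<one>\<^bsub>N\<^esub>"
    and "a \<in> carrier K \<Longrightarrow> x \<in> carrier M \<Longrightarrow> h (a \<odot>\<^bsub>M\<^esub> x) = a \<odot>\<^bsub>N\<^esub> h x"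
  using assms unfolding alg_iso_def ring_iso_def ring_hom_def by auto

lemma alg_iso_closed: "h \<in> alg_iso K M N \<Longrightarrow> x \<in> carrier M \<Longrightarrow> h x \<in> carrier N"
  using alg_isoD(1) bij_betwE by blast

lemma alg_iso_id: "id \<in> alg_iso K M M"
  by (rule alg_isoI) auto

lemma alg_iso_comp:
  assumes h: "h \<in> alg_iso K M N" and g: "g \<in> alg_iso K N L"
  shows "g \<circ> h \<in> alg_iso K M L"
  by (rule alg_isoI)
    (use bij_betw_trans[OF alg_isoD(1)[OF h] alg_isoD(1)[OF g]] alg_isoD(2-5)[OF h]
      alg_isoD(2-5)[OF g] alg_iso_closed[OF h] in auto)

lemma alg_iso_restrict:
  assumes h: "h \<in> alg_iso K M N" and C: "C \<subseteq> carrier M" "C' \<subseteq> carrier N"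
    and iff: "\<And>x. x \<in> carrier M \<Longrightarrow> h x \<in> C' \<longleftrightarrow> x \<in> C"
  shows "h \<in> alg_iso K (M\<lparr>carrier := C\<rparr>) (N\<lparr>carrier := C'\<rparr>)"
proof (rule alg_isoI)
  have "h ` C = C'"
  proof
    show "h ` C \<subseteq> C'" using iff C(1) by auto
    show "C' \<subseteq> h ` C"
    proof
      fix y assume y: "y \<in> C'"
      then obtain x where "x \<in> carrier M" "y = h x"
        using C(2) alg_isoD(1)[OF h] unfolding bij_betw_def by blast
      then show "y \<in> h ` C" using iff y by blast
    qed
  qed
  then have "bij_betw h C C'"
    using alg_isoD(1)[OF h] C(1) by (auto simp: bij_betw_def intro: inj_on_subset)
  then show "bij_betw h (carrier (M\<lparr>carrier := C\<rparr>)) (carrier (N\<lparr>carrier := C'\<rparr>))" by simp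
qed (use C alg_isoD(2-5)[OF h] in \<open>auto simp: subset_iff\<close>)

text \<open>An inverse of an \<^const>\<open>alg_iso\<close> is again one only when the carriers are closed under the
  operations, which is not tracked here; so isomorphisms are required in both directions.\<close>

definition mutually_iso :: "'k ring \<Rightarrow> ('k, 'a, 'c) module_scheme \<Rightarrow> ('k, 'b, 'd) module_scheme \<Rightarrow> bool"
  where "mutually_iso K M N \<longleftrightarrow> (\<exists>h. h \<in> alg_iso K M N) \<and> (\<exists>h. h \<in> alg_iso K N M)"

lemma mutually_iso_refl: "mutually_iso K M M"
  unfolding mutually_iso_def using alg_iso_id by blast

lemma mutually_iso_sym: "mutually_iso K M N \<Longrightarrow> mutually_iso K N M"
  unfolding mutually_iso_def by blast

lemma mutually_iso_trans [trans]: "mutually_iso K M N \<Longrightarrow> mutually_iso K N L \<Longrightarrow> mutually_iso K M L"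
  unfolding mutually_iso_def by (metis alg_iso_comp)

lemma prod_alg_map_iso:
  assumes h: "\<And>i. i \<in> A \<Longrightarrow> h i \<in> alg_iso K (Rs i) (Rs' i)"
  shows "(\<lambda>x. tuple K A (\<lambda>i. h i (coord x i))) \<in> alg_iso K (prod_alg K A Rs) (prod_alg K A Rs')"
proof (rule alg_isoI)
  let ?h' = "\<lambda>i. inv_into (carrier (Rs i)) (h i)"
  have bij: "bij_betw (h i) (carrier (Rs i)) (carrier (Rs' i))"
    and inv: "bij_betw (?h' i) (carrier (Rs' i)) (carrier (Rs i))"
    and left: "x \<in> carrier (Rs i) \<Longrightarrow> ?h' i (h i x) = x"
    and right: "y \<in> carrier (Rs' i) \<Longrightarrow> h i (?h' i y) = y"
    if "i \<in> A" for i x y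
    using alg_isoD(1)[OF h[OF that]]
    by (simp_all add: bij_betw_inv_into bij_betw_inv_into_left bij_betw_inv_into_right)
  note coord = coord_in_carrier[of _ K A Rs] coord_in_carrier[of _ K A Rs']
  show "bij_betw (\<lambda>x. tuple K A (\<lambda>i. h i (coord x i)))
      (carrier (prod_alg K A Rs)) (carrier (prod_alg K A Rs'))"
  proof (rule bij_betwI[where g = "\<lambda>y. tuple K A (\<lambda>i. ?h' i (coord y i))"])
    show "(\<lambda>x. tuple K A (\<lambda>i. h i (coord x i))) \<in> carrier (prod_alg K A Rs) \<rightarrow> carrier (prod_alg K A Rs')"
      using bij_betwE[OF bij] coord by simp
    show "(\<lambda>y. tuple K A (\<lambda>i. ?h' i (coord y i))) \<in> carrier (prod_alg K A Rs') \<rightarrow> carrier (prod_alg K A Rs)"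
      using bij_betwE[OF inv] coord by simp
  qed (use left right coord tuple_coord in \<open>auto intro!: tuple_eqI\<close>)
qed (use alg_isoD(2-5)[OF h] coord_in_carrier[of _ K A Rs] in \<open>auto intro!: tuple_eqI\<close>)

lemma prod_alg_reindex_iso:
  assumes g: "bij_betw g A' A"
  shows "(\<lambda>x. tuple K A' (\<lambda>k. coord x (g k))) \<in> alg_iso K (prod_alg K A Rs) (prod_alg K A' (Rs \<circ> g))"
proof -
  let ?g' = "inv_into A' g"
  have gA: "g k \<in> A" and left: "?g' (g k) = k" if "k \<in> A'" for k
    using g that by (auto simp: bij_betwE bij_betw_inv_into_left)
  have g'A: "?g' i \<in> A'" and right: "g (?g' i) = i" if "i \<in> A" for i
    using g that by (auto simp: bij_betwE[OF bij_betw_inv_into] bij_betw_inv_into_right)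
  have "bij_betw (\<lambda>x. tuple K A' (\<lambda>k. coord x (g k)))
      (carrier (prod_alg K A Rs)) (carrier (prod_alg K A' (Rs \<circ> g)))"
  proof (rule bij_betwI[where g = "\<lambda>y. tuple K A (\<lambda>i. coord y (?g' i))"])
    show "(\<lambda>x. tuple K A' (\<lambda>k. coord x (g k))) \<in> carrier (prod_alg K A Rs) \<rightarrow> carrier (prod_alg K A' (Rs \<circ> g))"
      using coord_in_carrier[of _ K A Rs] gA by simp
    have "coord y (?g' i) \<in> carrier (Rs i)"
      if "y \<in> carrier (prod_alg K A' (Rs \<circ> g))" "i \<in> A" for y i
      using coord_in_carrier[OF that(1) g'A[OF that(2)]] right[OF that(2)] by simp
    then show "(\<lambda>y. tuple K A (\<lambda>i. coord y (?g' i))) \<in> carrier (prod_alg K A' (Rs \<circ> g)) \<rightarrow> carrier (prod_alg K A Rs)"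
      by simp
    show "tuple K A (\<lambda>i. coord (tuple K A' (\<lambda>k. coord x (g k))) (?g' i)) = x"
      if "x \<in> carrier (prod_alg K A Rs)" for x
      using tuple_coord[OF that] g'A right by (auto intro: tuple_eqI)
    show "tuple K A' (\<lambda>k. coord (tuple K A (\<lambda>i. coord y (?g' i))) (g k)) = y"
      if "y \<in> carrier (prod_alg K A' (Rs \<circ> g))" for y
      using tuple_coord[OF that] gA left by (auto intro: tuple_eqI)
  qed
  then show ?thesis by (rule alg_isoI) (use gA in \<open>auto intro!: tuple_eqI\<close>)
qed

lemma alg_iso_R_algI:
  assumes F: "F \<in> alg_iso K (prod_alg K A Rs) (prod_alg K A' Rs')"
    and R: "\<And>i. i \<in> A \<Longrightarrow> scalar_unit_group K (Rs i)"
    and R': "\<And>i. i \<in> A' \<Longrightarrow> scalar_unit_group K (Rs' i)"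
    and off: "\<And>x c. x \<in> carrier (prod_alg K A Rs) \<Longrightarrow> c \<in> carrier K \<Longrightarrow>
      finite (off_scalar A' Rs' c (F x)) \<longleftrightarrow> finite (off_scalar A Rs c x)"
  shows "F \<in> alg_iso K (R_alg K A Rs) (R_alg K A' Rs')"
proof -
  have "F x \<in> cofinitely_scalar K A' Rs' \<longleftrightarrow> x \<in> cofinitely_scalar K A Rs"
    if "x \<in> carrier (prod_alg K A Rs)" for x
    using that alg_iso_closed[OF F that] off unfolding cofinitely_scalar_def by auto
  then have "F \<in> alg_iso K ((prod_alg K A Rs)\<lparr>carrier := cofinitely_scalar K A Rs\<rparr>)
      ((prod_alg K A' Rs')\<lparr>carrier := cofinitely_scalar K A' Rs'\<rparr>)"
    by (intro alg_iso_restrict[OF F]) (auto simp: cofinitely_scalar_def)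
  then show ?thesis by (simp only: R_alg_eq_restrict[OF R] R_alg_eq_restrict[OF R'])
qed

lemma R_alg_map_iso:
  assumes K: "ring K" and h: "\<And>i. i \<in> A \<Longrightarrow> h i \<in> alg_iso K (Rs i) (Rs' i)"
    and R: "\<And>i. i \<in> A \<Longrightarrow> scalar_unit_group K (Rs i)"
    and R': "\<And>i. i \<in> A \<Longrightarrow> scalar_unit_group K (Rs' i)"
  shows "(\<lambda>x. tuple K A (\<lambda>i. h i (coord x i))) \<in> alg_iso K (R_alg K A Rs) (R_alg K A Rs')"
proof (rule alg_iso_R_algI[OF prod_alg_map_iso[OF h] R R'])
  have scalar_iff: "h i (coord x i) = c \<odot>\<^bsub>Rs' i\<^esub> \<one>\<^bsub>Rs' i\<^esub> \<longleftrightarrow> coord x i = c \<odot>\<^bsub>Rs i\<^esub> \<one>\<^bsub>Rs i\<^esub>"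
    if "x \<in> carrier (prod_alg K A Rs)" "i \<in> A" "c \<in> carrier K" for x i c
  proof -
    have "h i (c \<odot>\<^bsub>Rs i\<^esub> \<one>\<^bsub>Rs i\<^esub>) = c \<odot>\<^bsub>Rs' i\<^esub> \<one>\<^bsub>Rs' i\<^esub>"
      using alg_isoD(4,5)[OF h] scalar_unit_group_one_closed[OF K R] that(2,3) by simp
    then show ?thesis
      using bij_betw_imp_inj_on[OF alg_isoD(1)[OF h]] coord_in_carrier[OF that(1,2)]
        scalar_unit_groupD(2)[OF R] that(2,3) by (metis inj_onD)
  qed
  fix x c assume "x \<in> carrier (prod_alg K A Rs)" "c \<in> carrier K"
  then have "off_scalar A Rs' c (tuple K A (\<lambda>i. h i (coord x i))) = off_scalar A Rs c x"
    using scalar_iff unfolding off_scalar_def by auto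
  then show "finite (off_scalar A Rs' c (tuple K A (\<lambda>i. h i (coord x i))))
      \<longleftrightarrow> finite (off_scalar A Rs c x)" by simp
qed

lemma R_alg_reindex_iso:
  assumes g: "bij_betw g A' A" and R: "\<And>i. i \<in> A \<Longrightarrow> scalar_unit_group K (Rs i)"
  shows "(\<lambda>x. tuple K A' (\<lambda>k. coord x (g k))) \<in> alg_iso K (R_alg K A Rs) (R_alg K A' (Rs \<circ> g))"
proof (rule alg_iso_R_algI[OF prod_alg_reindex_iso[OF g] R])
  show "scalar_unit_group K ((Rs \<circ> g) k)" if "k \<in> A'" for k
    using R bij_betwE[OF g] that by simp
  fix x c
  let ?off = "off_scalar A' (Rs \<circ> g) c (tuple K A' (\<lambda>k. coord x (g k)))"
  have "g ` ?off = off_scalar A Rs c x" and "inj_on g ?off"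
    using g unfolding off_scalar_def bij_betw_def by (auto intro: inj_on_subset)
  then show "finite ?off \<longleftrightarrow> finite (off_scalar A Rs c x)" using finite_image_iff by metis
qed

lemma R_alg_cong: "(\<And>i. i \<in> A \<Longrightarrow> Rs i = Rs' i) \<Longrightarrow> R_alg K A Rs = R_alg K A Rs'"
proof -
  assume eq: "\<And>i. i \<in> A \<Longrightarrow> Rs i = Rs' i"
  then have "prod_alg K A Rs = prod_alg K A Rs'"
    unfolding prod_alg_def by (simp cong: if_cong conj_cong)
  moreover have "{i \<in> A. coord s i \<noteq> \<zero>\<^bsub>Rs i\<^esub>} = {i \<in> A. coord s i \<noteq> \<zero>\<^bsub>Rs' i\<^esub>}" for s
    using eq by auto
  ultimately show ?thesis unfolding R_alg_def Let_def by simp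
qed

lemma mutually_iso_R_alg_map:
  assumes K: "ring K" and iso: "\<And>i. i \<in> A \<Longrightarrow> mutually_iso K (Rs i) (Rs' i)"
    and R: "\<And>i. i \<in> A \<Longrightarrow> scalar_unit_group K (Rs i)"
    and R': "\<And>i. i \<in> A \<Longrightarrow> scalar_unit_group K (Rs' i)"
  shows "mutually_iso K (R_alg K A Rs) (R_alg K A Rs')"
proof -
  obtain h h' where "\<And>i. i \<in> A \<Longrightarrow> h i \<in> alg_iso K (Rs i) (Rs' i)"
    and "\<And>i. i \<in> A \<Longrightarrow> h' i \<in> alg_iso K (Rs' i) (Rs i)"
    using iso unfolding mutually_iso_def by metis
  then show ?thesis unfolding mutually_iso_def using R_alg_map_iso[OF K] R R' by blast
qed

lemma mutually_iso_R_alg_reindex: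
  assumes g: "bij_betw g A' A" and R: "\<And>i. i \<in> A \<Longrightarrow> scalar_unit_group K (Rs i)"
  shows "mutually_iso K (R_alg K A Rs) (R_alg K A' (Rs \<circ> g))"
proof -
  let ?g' = "inv_into A' g"
  have g': "bij_betw ?g' A A'" using bij_betw_inv_into[OF g] .
  have R': "\<And>k. k \<in> A' \<Longrightarrow> scalar_unit_group K ((Rs \<circ> g) k)" using R bij_betwE[OF g] by simp
  have "R_alg K A ((Rs \<circ> g) \<circ> ?g') = R_alg K A Rs"
    using g by (intro R_alg_cong) (simp add: bij_betw_inv_into_right)
  then have "\<exists>h. h \<in> alg_iso K (R_alg K A' (Rs \<circ> g)) (R_alg K A Rs)"
    using R_alg_reindex_iso[where Rs = "Rs \<circ> g", OF g' R'] by auto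
  then show ?thesis
    unfolding mutually_iso_def using R_alg_reindex_iso[where Rs = Rs, OF g R] by blast
qed

definition pair :: "'k ring \<Rightarrow> 'k bt \<Rightarrow> 'k bt \<Rightarrow> 'k bt" where
  "pair K a b = tuple K {0, 1} (\<lambda>i. if i = 0 then a else b)"

lemma coord_pair [simp]:
  "coord (pair K a b) 0 = a" "coord (pair K a b) 1 = b" "coord (pair K a b) (Suc 0) = b"
  unfolding pair_def by simp_all

lemma pair_eq_iff [simp]: "pair K a b = pair K a' b' \<longleftrightarrow> a = a' \<and> b = b'"
  by (metis coord_pair)

lemma carrier_ring_dprod:
  "carrier (ring_dprod K M N) = {pair K a b | a b. a \<in> carrier M \<and> b \<in> carrier N}"
proof (intro equalityI subsetI)
  fix x assume x: "x \<in> carrier (ring_dprod K M N)"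
  then have "coord x 0 \<in> carrier M" "coord x 1 \<in> carrier N"
    using coord_in_carrier[of x K "{0, 1}" "\<lambda>i. if i = 0 then M else N" 0]
      coord_in_carrier[of x K "{0, 1}" "\<lambda>i. if i = 0 then M else N" 1]
    unfolding ring_dprod_def by simp_all
  moreover have "x = pair K (coord x 0) (coord x 1)"
    using x unfolding ring_dprod_def pair_def carrier_prod_alg_iff by (auto intro: tuple_eqI)
  ultimately show "x \<in> {pair K a b | a b. a \<in> carrier M \<and> b \<in> carrier N}" by blast
qed (auto simp: ring_dprod_def pair_def)

lemma pair_in_ring_dprod [simp]:
  "pair K a b \<in> carrier (ring_dprod K M N) \<longleftrightarrow> a \<in> carrier M \<and> b \<in> carrier N"
  unfolding carrier_ring_dprod by simp

lemma ring_dprodE: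
  assumes "z \<in> carrier (ring_dprod K M N)"
  obtains a b where "z = pair K a b" "a \<in> carrier M" "b \<in> carrier N"
  using assms unfolding carrier_ring_dprod by blast

lemma ring_dprod_simps [simp]:
  "pair K a b \<otimes>\<^bsub>ring_dprod K M N\<^esub> pair K a' b' = pair K (a \<otimes>\<^bsub>M\<^esub> a') (b \<otimes>\<^bsub>N\<^esub> b')"
  "pair K a b \<oplus>\<^bsub>ring_dprod K M N\<^esub> pair K a' b' = pair K (a \<oplus>\<^bsub>M\<^esub> a') (b \<oplus>\<^bsub>N\<^esub> b')"
  "\<one>\<^bsub>ring_dprod K M N\<^esub> = pair K \<one>\<^bsub>M\<^esub> \<one>\<^bsub>N\<^esub>"
  "t \<odot>\<^bsub>ring_dprod K M N\<^esub> pair K a b = pair K (t \<odot>\<^bsub>M\<^esub> a) (t \<odot>\<^bsub>N\<^esub> b)"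
  unfolding ring_dprod_def pair_def by (auto intro!: tuple_eqI)

lemma mutually_iso_ring_dprod:
  assumes "mutually_iso K M M'" "mutually_iso K N N'"
  shows "mutually_iso K (ring_dprod K M N) (ring_dprod K M' N')"
proof -
  obtain f f' g g' where "f \<in> alg_iso K M M'" "f' \<in> alg_iso K M' M"
    "g \<in> alg_iso K N N'" "g' \<in> alg_iso K N' N"
    using assms unfolding mutually_iso_def by blast
  then have "(\<lambda>z. tuple K {0, 1} (\<lambda>i. (if i = 0 then f else g) (coord z i)))
      \<in> alg_iso K (ring_dprod K M N) (ring_dprod K M' N')"
    and "(\<lambda>z. tuple K {0, 1} (\<lambda>i. (if i = 0 then f' else g') (coord z i)))
      \<in> alg_iso K (ring_dprod K M' N') (ring_dprod K M N)"
    unfolding ring_dprod_def by (auto intro!: prod_alg_map_iso)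
  then show ?thesis unfolding mutually_iso_def by blast
qed

lemma mutually_iso_ring_dprod_assoc:
  "mutually_iso K (ring_dprod K (ring_dprod K M N) L) (ring_dprod K M (ring_dprod K N L))"
proof -
  let ?A = "ring_dprod K (ring_dprod K M N) L" and ?B = "ring_dprod K M (ring_dprod K N L)"
  let ?F = "\<lambda>z. pair K (coord (coord z 0) 0) (pair K (coord (coord z 0) 1) (coord z 1))"
  let ?G = "\<lambda>z. pair K (pair K (coord z 0) (coord (coord z 1) 0)) (coord (coord z 1) 1)"
  have "bij_betw ?F (carrier ?A) (carrier ?B)"
    by (rule bij_betwI[where g = ?G]) (auto elim!: ring_dprodE)
  moreover have "bij_betw ?G (carrier ?B) (carrier ?A)"
    by (rule bij_betwI[where g = ?F]) (auto elim!: ring_dprodE)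
  ultimately have "?F \<in> alg_iso K ?A ?B" "?G \<in> alg_iso K ?B ?A"
    by (auto intro!: alg_isoI elim!: ring_dprodE)
  then show ?thesis unfolding mutually_iso_def by blast
qed

lemma R_alg_split_iso:
  assumes R: "\<And>i. i \<in> A \<Longrightarrow> scalar_unit_group K (Rs i)" and j: "j \<in> A"
  shows "mutually_iso K (R_alg K A Rs) (ring_dprod K (Rs j) (R_alg K (A - {j}) Rs))"
proof -
  let ?R = "R_alg K A Rs" and ?D = "ring_dprod K (Rs j) (R_alg K (A - {j}) Rs)"
  let ?F = "\<lambda>x. pair K (coord x j) (tuple K (A - {j}) (coord x))"
  let ?G = "\<lambda>z. tuple K A (\<lambda>i. if i = j then coord z 0 else coord (coord z 1) i)"
  have cR: "carrier ?R = cofinitely_scalar K A Rs" by (rule carrier_R_alg[OF R])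
  have cD: "z \<in> carrier ?D \<longleftrightarrow>
      (\<exists>a b. z = pair K a b \<and> a \<in> carrier (Rs j) \<and> b \<in> cofinitely_scalar K (A - {j}) Rs)" for z
  proof -
    have "carrier (R_alg K (A - {j}) Rs) = cofinitely_scalar K (A - {j}) Rs"
      using R by (intro carrier_R_alg) auto
    then show ?thesis unfolding carrier_ring_dprod by auto
  qed
  have F: "?F x \<in> carrier ?D" if "x \<in> carrier ?R" for x
    using that cofinitely_scalar_restrict[of "A - {j}" A x K Rs] coord_in_carrier[of x K A Rs] j
    unfolding cR cD cofinitely_scalar_def by auto
  have G: "?G (pair K a b) \<in> carrier ?R"
    if "a \<in> carrier (Rs j)" and "b \<in> cofinitely_scalar K (A - {j}) Rs" for a b
    using cofinitely_scalar_extend[OF that] unfolding cR by (simp cong: if_cong)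
  have GF: "?G (?F x) = x" if "x \<in> carrier ?R" for x
  proof -
    have "?G (?F x) = tuple K A (coord x)" by (rule tuple_eqI) simp
    then show ?thesis using that tuple_coord[of x K A Rs] unfolding cR cofinitely_scalar_def by simp
  qed
  have FG: "?F (?G (pair K a b)) = pair K a b"
    if "b \<in> cofinitely_scalar K (A - {j}) Rs" for a b
    using that j tuple_coord[of b K "A - {j}" Rs] unfolding cofinitely_scalar_def
    by (auto intro: tuple_eqI)
  have "bij_betw ?F (carrier ?R) (carrier ?D)"
    by (rule bij_betwI[where g = ?G]) (use F G GF FG in \<open>auto simp: cD\<close>)
  moreover have "bij_betw ?G (carrier ?D) (carrier ?R)"
    by (rule bij_betwI[where g = ?F]) (use F G GF FG in \<open>auto simp: cD\<close>)
  ultimately have "?F \<in> alg_iso K ?R ?D" "?G \<in> alg_iso K ?D ?R"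
    using j by (auto intro!: alg_isoI tuple_eqI simp: cD cong: if_cong)
  then show ?thesis unfolding mutually_iso_def by blast
qed

section \<open>Absorption\<close>

definition absorbs :: "'k ring \<Rightarrow> 'k alg \<Rightarrow> 'k alg \<Rightarrow> bool" where
  "absorbs K M N \<longleftrightarrow> mutually_iso K M (ring_dprod K N M)"

lemma absorbs_summand:
  assumes M: "mutually_iso K M (ring_dprod K N L)" and N: "absorbs K N P"
  shows "absorbs K M P"
proof -
  have "mutually_iso K M (ring_dprod K (ring_dprod K P N) L)"
    using mutually_iso_trans[OF M mutually_iso_ring_dprod[OF N[unfolded absorbs_def] mutually_iso_refl]] .
  then have "mutually_iso K M (ring_dprod K P (ring_dprod K N L))"
    using mutually_iso_ring_dprod_assoc mutually_iso_trans by blast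
  then show ?thesis
    unfolding absorbs_def
    using mutually_iso_trans mutually_iso_ring_dprod[OF mutually_iso_refl mutually_iso_sym[OF M]] by blast
qed

lemma absorbs_trans: "absorbs K M N \<Longrightarrow> absorbs K N P \<Longrightarrow> absorbs K M P"
  unfolding absorbs_def[of K M N] by (rule absorbs_summand)

lemma absorbs_R_alg_nat:
  assumes "scalar_unit_group K M"
  shows "absorbs K (R_alg K UNIV (\<lambda>_. M)) M"
proof -
  have "mutually_iso K (R_alg K UNIV (\<lambda>_. M)) (ring_dprod K M (R_alg K (UNIV - {0}) (\<lambda>_. M)))"
    using R_alg_split_iso[where A = UNIV and Rs = "\<lambda>_. M" and j = 0] assms by simp
  moreover have "bij_betw Suc UNIV (UNIV - {0 :: nat})"
    by (auto simp: bij_betw_def image_iff) (metis not0_implies_Suc)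
  then have "mutually_iso K (R_alg K (UNIV - {0}) (\<lambda>_. M)) (R_alg K UNIV (\<lambda>_. M))"
    using mutually_iso_R_alg_reindex[where g = Suc and A' = UNIV and A = "UNIV - {0}" and Rs = "\<lambda>_. M"] assms
    by (simp add: comp_def)
  ultimately show ?thesis
    unfolding absorbs_def using mutually_iso_ring_dprod mutually_iso_refl mutually_iso_trans by blast
qed

section \<open>The transfinite tower\<close>

lemma Well_order_the_greatest:
  assumes r: "Well_order r" and m: "m \<in> S" "\<forall>y\<in>S. (y, m) \<in> r"
  shows "(THE m. m \<in> S \<and> (\<forall>y\<in>S. (y, m) \<in> r)) = m"
  using m wo_rel.ANTISYM[of r] r unfolding wo_rel_def antisym_def by (intro the_equality) blast+

lemma Well_order_wf: "Well_order r \<Longrightarrow> wf (r - Id)"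
  using wo_rel.WF unfolding wo_rel_def .

lemma B_step_empty: "B_step K r {} rec = base_alg K"
  unfolding B_step_def by simp

lemma B_step_greatest:
  assumes "Well_order r" "m \<in> S" "\<forall>y\<in>S. (y, m) \<in> r"
  shows "B_step K r S rec = R_alg K UNIV (\<lambda>_. rec m)"
  using assms Well_order_the_greatest[OF assms] unfolding B_step_def by auto

lemma B_step_no_greatest:
  assumes "S \<noteq> {}" "\<not> (\<exists>m\<in>S. \<forall>y\<in>S. (y, m) \<in> r)"
  shows "B_step K r S rec = R_alg K S rec"
  unfolding B_step_def by (simp only: if_not_P[OF assms(1)] if_not_P[OF assms(2)])

lemma B_step_cong:
  assumes r: "Well_order r" and eq: "\<And>y. y \<in> S \<Longrightarrow> rec y = rec' y"
  shows "B_step K r S rec = B_step K r S rec'"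
proof (cases "\<exists>m\<in>S. \<forall>y\<in>S. (y, m) \<in> r")
  case True
  then obtain m where m: "m \<in> S" "\<forall>y\<in>S. (y, m) \<in> r" by blast
  have "B_step K r S rec = R_alg K UNIV (\<lambda>_. rec m)" "B_step K r S rec' = R_alg K UNIV (\<lambda>_. rec' m)"
    by (rule B_step_greatest[OF r m])+
  then show ?thesis using eq[OF m(1)] by simp
next
  case False
  then show ?thesis using eq R_alg_cong[of S rec rec' K]
    by (cases "S = {}") (simp_all add: B_step_empty B_step_no_greatest)
qed

lemma B_below_unfold:
  assumes r: "Well_order r"
  shows "B_below K r x = B_step K r (underS r x) (B_below K r)"
proof -
  have "B_below K r x = B_step K r (underS r x) (cut (B_below K r) (r - Id) x)"
    unfolding B_below_def by (rule wfrec[OF Well_order_wf[OF r]])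
  also have "\<dots> = B_step K r (underS r x) (B_below K r)"
    by (rule B_step_cong[OF r]) (auto simp: cut_def underS_def)
  finally show ?thesis .
qed

lemma scalar_unit_group_B_step:
  assumes K: "ring K" and r: "Well_order r" and rec: "\<And>y. y \<in> S \<Longrightarrow> scalar_unit_group K (rec y)"
  shows "scalar_unit_group K (B_step K r S rec)"
proof -
  have K': "abelian_group K" using K by (rule ring.is_abelian_group)
  consider "S = {}" | m where "m \<in> S" "\<forall>y\<in>S. (y, m) \<in> r"
    | "S \<noteq> {}" "\<not> (\<exists>m\<in>S. \<forall>y\<in>S. (y, m) \<in> r)" by blast
  then show ?thesis
  proof cases
    case 1
    then show ?thesis using scalar_unit_group_base_alg[OF K] by (simp add: B_step_empty)
  next
    case (2 m)
    have "scalar_unit_group K (R_alg K UNIV (\<lambda>_. rec m))"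
      by (rule scalar_unit_group_R_alg[OF K' rec[OF 2(1)]])
    then show ?thesis by (simp add: B_step_greatest[OF r 2])
  next
    case 3
    have "scalar_unit_group K (R_alg K S rec)" by (rule scalar_unit_group_R_alg[OF K' rec])
    then show ?thesis by (simp add: B_step_no_greatest[OF 3])
  qed
qed

lemma scalar_unit_group_B_below:
  assumes K: "ring K" and r: "Well_order r"
  shows "scalar_unit_group K (B_below K r x)"
  using Well_order_wf[OF r]
proof (induction x rule: wf_induct_rule)
  case (less x)
  have "scalar_unit_group K (B_step K r (underS r x) (B_below K r))"
    by (rule scalar_unit_group_B_step[OF K r]) (simp add: less.IH underS_def)
  then show ?case using B_below_unfold[OF r, of K x] by simp
qed

definition ord_iso_betw :: "'a rel \<Rightarrow> 'b rel \<Rightarrow> ('a \<Rightarrow> 'b) \<Rightarrow> 'a set \<Rightarrow> 'b set \<Rightarrow> bool" where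
  "ord_iso_betw r r' f S S' \<longleftrightarrow> bij_betw f S S' \<and> (\<forall>a\<in>S. \<forall>b\<in>S. (a, b) \<in> r \<longleftrightarrow> (f a, f b) \<in> r')"

lemma ord_iso_betw_greatest_iff:
  assumes "ord_iso_betw r r' f S S'" and "m \<in> S"
  shows "(\<forall>y\<in>S'. (y, f m) \<in> r') \<longleftrightarrow> (\<forall>y\<in>S. (y, m) \<in> r)"
  using assms unfolding ord_iso_betw_def bij_betw_def by auto

lemma ord_iso_betw_ex_greatest_iff:
  assumes f: "ord_iso_betw r r' f S S'"
  shows "(\<exists>m'\<in>S'. \<forall>y\<in>S'. (y, m') \<in> r') \<longleftrightarrow> (\<exists>m\<in>S. \<forall>y\<in>S. (y, m) \<in> r)"
proof -
  have "S' = f ` S" using f unfolding ord_iso_betw_def bij_betw_def by simp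
  then show ?thesis using ord_iso_betw_greatest_iff[OF f] by blast
qed

lemma ord_iso_betw_underS:
  assumes S: "ofilter r S" and S': "ofilter r' S'" and f: "ord_iso_betw r r' f S S'" and y: "y \<in> S"
  shows "ord_iso_betw r r' f (underS r y) (underS r' (f y))"
proof -
  have inj: "inj_on f S" and img: "f ` S = S'"
    and ord: "\<And>a b. a \<in> S \<Longrightarrow> b \<in> S \<Longrightarrow> (a, b) \<in> r \<longleftrightarrow> (f a, f b) \<in> r'"
    using f unfolding ord_iso_betw_def bij_betw_def by auto
  have sub: "underS r y \<subseteq> S" using S y unfolding ofilter_def under_def underS_def by blast
  have "f ` underS r y = underS r' (f y)"
  proof
    show "f ` underS r y \<subseteq> underS r' (f y)"
      using sub ord y inj_onD[OF inj] unfolding underS_def by blast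
    show "underS r' (f y) \<subseteq> f ` underS r y"
    proof
      fix w assume w: "w \<in> underS r' (f y)"
      then have "w \<in> S'" using S' img y unfolding ofilter_def under_def underS_def by blast
      then obtain z where "z \<in> S" "w = f z" using img by blast
      then show "w \<in> f ` underS r y" using w ord[of z y] y unfolding underS_def by blast
    qed
  qed
  then show ?thesis
    using sub ord inj_on_subset[OF inj sub] unfolding ord_iso_betw_def bij_betw_def by blast
qed

lemma mutually_iso_B_step:
  assumes K: "ring K" and r: "Well_order r" and r': "Well_order r'" and f: "ord_iso_betw r r' f S S'"
    and iso: "\<And>y. y \<in> S \<Longrightarrow> mutually_iso K (rec y) (rec' (f y))"
    and R: "\<And>y. y \<in> S \<Longrightarrow> scalar_unit_group K (rec y)"
    and R': "\<And>y. y \<in> S' \<Longrightarrow> scalar_unit_group K (rec' y)"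
  shows "mutually_iso K (B_step K r S rec) (B_step K r' S' rec')"
proof -
  have bij: "bij_betw f S S'" using f unfolding ord_iso_betw_def by blast
  consider "S = {}" | m where "m \<in> S" "\<forall>y\<in>S. (y, m) \<in> r"
    | "S \<noteq> {}" "\<not> (\<exists>m\<in>S. \<forall>y\<in>S. (y, m) \<in> r)" by blast
  then show ?thesis
  proof cases
    case 1
    then have "S' = {}" using bij unfolding bij_betw_def by blast
    then show ?thesis using 1 mutually_iso_refl by (simp add: B_step_empty)
  next
    case (2 m)
    have "f m \<in> S'" "\<forall>y\<in>S'. (y, f m) \<in> r'"
      using 2 bij_betwE[OF bij] ord_iso_betw_greatest_iff[OF f] by auto
    moreover have "mutually_iso K (R_alg K UNIV (\<lambda>_. rec m)) (R_alg K UNIV (\<lambda>_. rec' (f m)))"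
      using 2 bij_betwE[OF bij] by (intro mutually_iso_R_alg_map[OF K] iso R R') auto
    ultimately show ?thesis by (simp add: B_step_greatest[OF r 2] B_step_greatest[OF r'])
  next
    case 3
    have "S' \<noteq> {}" "\<not> (\<exists>m\<in>S'. \<forall>y\<in>S'. (y, m) \<in> r')"
      using 3 bij ord_iso_betw_ex_greatest_iff[OF f] unfolding bij_betw_def by auto
    moreover have "mutually_iso K (R_alg K S rec) (R_alg K S (rec' \<circ> f))"
      using bij_betwE[OF bij] iso R R' by (intro mutually_iso_R_alg_map[OF K]) auto
    moreover have "mutually_iso K (R_alg K S' rec') (R_alg K S (rec' \<circ> f))"
      by (rule mutually_iso_R_alg_reindex[OF bij R'])
    ultimately show ?thesis
      using mutually_iso_sym mutually_iso_trans
      by (metis B_step_no_greatest[OF 3] B_step_no_greatest)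
  qed
qed

lemma mutually_iso_B_below:
  assumes K: "ring K" and r: "Well_order r" and r': "Well_order r'"
    and S: "ofilter r S" and S': "ofilter r' S'" and f: "ord_iso_betw r r' f S S'"
  shows "y \<in> S \<Longrightarrow> mutually_iso K (B_below K r y) (B_below K r' (f y))"
  using Well_order_wf[OF r]
proof (induction y rule: wf_induct_rule)
  case (less y)
  have "underS r y \<subseteq> S" using S less.prems unfolding ofilter_def under_def underS_def by blast
  then have "mutually_iso K (B_step K r (underS r y) (B_below K r))
      (B_step K r' (underS r' (f y)) (B_below K r'))"
    using less.IH scalar_unit_group_B_below[OF K r] scalar_unit_group_B_below[OF K r']
    by (intro mutually_iso_B_step[OF K r r' ord_iso_betw_underS[OF S S' f less.prems]])
      (auto simp: underS_def)
  then show ?case by (simp only: B_below_unfold[OF r, symmetric] B_below_unfold[OF r', symmetric])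
qed

lemma B_ord_mutually_iso_B_below:
  assumes K: "ring K" and r: "Well_order r" and s: "Well_order s" and rs: "(r, s) \<in> ordLess"
  obtains x where "x \<in> Field s" "mutually_iso K (B_ord K r) (B_below K s x)"
proof -
  obtain x f where x: "x \<in> Field s"
    and f: "BNF_Wellorder_Embedding.iso r (Restr s (underS s x)) f"
    using ordLess_iff_ordIso_Restr[OF s r] rs unfolding ordIso_def by auto
  have ofilter: "ofilter s (underS s x)" using s by (simp add: wo_rel.underS_ofilter wo_rel_def)
  then have "Field (Restr s (underS s x)) = underS s x" by (rule Field_Restr_ofilter[OF s])
  then have "ord_iso_betw r s f (Field r) (underS s x)"
    using f unfolding ord_iso_betw_def BNF_Wellorder_Embedding.iso_iff2 bij_betw_def by auto
  then have "mutually_iso K (B_step K r (Field r) (B_below K r)) (B_step K s (underS s x) (B_below K s))"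
    using mutually_iso_B_below[OF K r s _ ofilter] scalar_unit_group_B_below[OF K r]
      scalar_unit_group_B_below[OF K s] wo_rel.Field_ofilter[of r] r
    by (intro mutually_iso_B_step[OF K r s]) (auto simp: wo_rel_def)
  then show ?thesis using that x by (simp add: B_ord_def B_below_unfold[OF s])
qed

lemma Well_order_succ_in_limit:
  assumes s: "Well_order s" and S: "ofilter s S" and x: "x \<in> S"
    and limit: "\<not> (\<exists>m\<in>S. \<forall>y\<in>S. (y, m) \<in> s)"
  obtains y where "y \<in> S" "x \<in> underS s y" "\<forall>w\<in>underS s y. (w, x) \<in> s"
proof -
  let ?T = "{z \<in> S. (x, z) \<in> s \<and> z \<noteq> x}"
  have wo: "wo_rel s" using s by (simp add: wo_rel_def)
  have above: "w \<in> ?T" if "w \<in> S" "(w, x) \<notin> s" for w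
  proof -
    have "w \<in> Field s" "x \<in> Field s" using that x S unfolding ofilter_def by auto
    then show ?thesis using that wo_rel.TOTALS[OF wo] refl_onD[OF wo_rel.REFL[OF wo]] by blast
  qed
  obtain z where "z \<in> S" "(z, x) \<notin> s" using limit x by blast
  then have "z \<in> ?T" by (rule above)
  with Well_order_wf[OF s] obtain y where y: "y \<in> ?T" and y_min: "\<And>w. (w, y) \<in> s - Id \<Longrightarrow> w \<notin> ?T"
    by (rule wfE_min) iprover
  have "(w, x) \<in> s" if "w \<in> underS s y" for w
  proof (rule ccontr)
    assume "(w, x) \<notin> s"
    moreover have "w \<in> S" using that y S unfolding ofilter_def under_def underS_def by blast
    ultimately have "w \<in> ?T" using above by blast
    then show False using y_min that unfolding underS_def by blast
  qed
  then show ?thesis using that y unfolding underS_def by blast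
qed

lemma B_step_absorbs:
  assumes K: "ring K" and s: "Well_order s" and S: "ofilter s S" and x: "x \<in> S"
    and IH: "\<And>z y. z \<in> S \<Longrightarrow> y \<in> underS s z \<Longrightarrow> absorbs K (B_below K s z) (B_below K s y)"
  shows "absorbs K (B_step K s S (B_below K s)) (B_below K s x)"
proof -
  let ?B = "B_below K s"
  have B: "scalar_unit_group K (?B y)" for y by (rule scalar_unit_group_B_below[OF K s])
  consider m where "m \<in> S" "\<forall>y\<in>S. (y, m) \<in> s" | "\<not> (\<exists>m\<in>S. \<forall>y\<in>S. (y, m) \<in> s)" by blast
  then show ?thesis
  proof cases
    case (1 m)
    have "absorbs K (B_step K s S ?B) (?B m)"
      using absorbs_R_alg_nat[OF B] by (simp add: B_step_greatest[OF s 1])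
    moreover have "absorbs K (?B m) (?B x)" if "x \<noteq> m"
      using IH[OF 1(1)] 1(2) x that by (simp add: underS_def)
    ultimately show ?thesis using absorbs_trans by (cases "x = m") auto
  next
    case 2
    obtain y where y: "y \<in> S" "x \<in> underS s y" "\<forall>w\<in>underS s y. (w, x) \<in> s"
      using Well_order_succ_in_limit[OF s S x 2] .
    have "?B y = R_alg K UNIV (\<lambda>_. ?B x)"
      using B_below_unfold[OF s, of K y] by (simp add: B_step_greatest[OF s y(2,3)])
    then have "absorbs K (?B y) (?B x)" using absorbs_R_alg_nat[OF B] by simp
    moreover have "mutually_iso K (R_alg K S ?B) (ring_dprod K (?B y) (R_alg K (S - {y}) ?B))"
      by (rule R_alg_split_iso[OF B y(1)])
    moreover have "S \<noteq> {}" using x by blast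
    ultimately show ?thesis using absorbs_summand by (simp add: B_step_no_greatest[OF _ 2])
  qed
qed

lemma B_below_absorbs:
  assumes K: "ring K" and s: "Well_order s"
  shows "y \<in> underS s z \<Longrightarrow> absorbs K (B_below K s z) (B_below K s y)"
  using Well_order_wf[OF s]
proof (induction z arbitrary: y rule: wf_induct_rule)
  case (less z)
  have "ofilter s (underS s z)" using s by (simp add: wo_rel.underS_ofilter wo_rel_def)
  then have "absorbs K (B_step K s (underS s z) (B_below K s)) (B_below K s y)"
    using less by (intro B_step_absorbs[OF K s]) (auto simp: underS_def)
  then show ?case by (simp only: B_below_unfold[OF s, symmetric])
qed

lemma B_ord_absorbs:
  assumes K: "ring K" and s: "Well_order s" and x: "x \<in> Field s"
  shows "absorbs K (B_ord K s) (B_below K s x)"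
proof -
  have "ofilter s (Field s)" using s by (simp add: wo_rel.Field_ofilter wo_rel_def)
  then show ?thesis
    unfolding B_ord_def using B_below_absorbs[OF K s] by (rule B_step_absorbs[OF K s _ x])
qed

theorem corollary6p10:
  fixes K :: "'k ring" and r s :: "nat rel"
  assumes "field K"
    and "Well_order r" and "Well_order s"
    and "(r, s) \<in> ordLess"
  shows "\<exists>h. h \<in> alg_iso K (B_ord K s) (ring_dprod K (B_ord K r) (B_ord K s))"
proof -
  have K: "ring K" using \<open>field K\<close> by (rule field.is_ring)
  obtain x where "x \<in> Field s" and r_iso: "mutually_iso K (B_ord K r) (B_below K s x)"
    using B_ord_mutually_iso_B_below[OF K assms(2-4)] .
  then have "mutually_iso K (B_ord K s) (ring_dprod K (B_below K s x) (B_ord K s))"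
    using B_ord_absorbs[OF K assms(3)] unfolding absorbs_def by blast
  also have "mutually_iso K \<dots> (ring_dprod K (B_ord K r) (B_ord K s))"
    by (rule mutually_iso_ring_dprod[OF mutually_iso_sym[OF r_iso] mutually_iso_refl])
  finally show ?thesis unfolding mutually_iso_def by blast
qed

end
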